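(* Let $\mathcal{G}\subset\mathcal{S}$ with harmonic analogue $\mathcal{G}_H^0$. Suppose $P,Q$ are integrable functions on $[0,1)$ such that $P(|z|)\le|f'(z)|\le Q(|z|)$ for all $z\in\mathbb{D}$ and all $f\in\mathcal{G}$. Then every $f\in\mathcal{G}_H^0$ satisfies $$\int_0^{|z|}P(\rho)\,d\rho\le|f(z)|\le\int_0^{|z|}Q(\rho)\,d\rho,\quad z\in\mathbb{D}.$$ In particular, provided the limit exists, the range of every $f\in\mathcal{G}_H^0$ contains the disk $\{w\in\mathbb{C}:|w|<\lim_{|z|\to1}\int_0^{|z|}P(\rho)\,d\rho\}$.
   Context: $\mathbb{D}$ is the open unit disk. $\mathcal{S}$ is the class of analytic univalent functions $f$ in $\mathbb{D}$ with $f(0)=0$, $f'(0)=1$. For $\mathcal{G}\subset\mathcal{S}$, its harmonic analogue $\mathcal{G}_H^0$ is the class of harmonic functions $f=h+\bar g$ ($h,g$ analytic in $\mathbb{D}$) such that $h+\epsilon g\in\mathcal{G}$ for every $\epsilon\in\mathbb{C}$ with $|\epsilon|=1$. *)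

theory Defs
  imports "HOL-Complex_Analysis.Complex_Analysis"
begin

text \<open>The class S of normalized analytic univalent functions on the unit disk.
  Functions are total on complex; only their values on the disk matter.\<close>
definition class_S :: "(complex \<Rightarrow> complex) set" where
  "class_S = {f. f holomorphic_on ball 0 1 \<and> inj_on f (ball 0 1) \<and> f 0 = 0 \<and> deriv f 0 = 1}"

definition harmonic_analogue :: "(complex \<Rightarrow> complex) set \<Rightarrow> (complex \<Rightarrow> complex) set" where
  "harmonic_analogue G = {f. \<exists>h g. h holomorphic_on ball 0 1 \<and> g holomorphic_on ball 0 1 \<and>
      (\<forall>z\<in>ball 0 1. f z = h z + cnj (g z)) \<and>
      (\<forall>\<epsilon>. norm \<epsilon> = 1 \<longrightarrow> (\<exists>F\<in>G. \<forall>z\<in>ball 0 1. F z = h z + \<epsilon> * g z))}"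

end

theory Submission
  imports Defs
begin

text \<open>For \<open>f = h + cnj g\<close> in the harmonic analogue and a fixed \<open>z\<close>, the unimodular \<open>\<epsilon>\<close> with
  \<open>\<epsilon> g(z) = cnj (g z)\<close> gives \<open>f z = F z\<close> for the member \<open>F = h + \<epsilon> g\<close> of \<open>G\<close>, so the
  two-sided estimate reduces to univalent \<open>F\<close>. The upper bound comes from integrating \<open>|F'|\<close>
  along the radius. For the lower bound, let \<open>z0\<close> minimise \<open>|F|\<close> on the circle \<open>|\<zeta>| = |z|\<close>;
  the \<open>F\<close>-preimage of the segment \<open>[0, F z0]\<close> runs from \<open>0\<close> to that circle, and its length
  weighted by the continuous minorant \<open>m \<rho> = min {|F' \<zeta>| | |\<zeta>| = \<rho>} \<ge> P \<rho>\<close> is at most \<open>|F z0|\<close>.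

  For the covering statements, injectivity of every \<open>h + \<epsilon> g\<close> forces \<open>|g| < |h|\<close> on the
  punctured disc and \<open>h(z)/z \<noteq> 0\<close>. Hence on a circle where \<open>|f| > |w|\<close>, the loop \<open>f - w\<close>
  is homotopic in \<open>\<complex> - {0}\<close> to \<open>f\<close>, to \<open>h\<close> and to the identity; if \<open>w\<close> were omitted,
  \<open>f - w\<close> would extend to the closed disc without zeros, and the circle would be contractible.\<close>

definition diff_quot_0 :: "(complex \<Rightarrow> complex) \<Rightarrow> complex \<Rightarrow> complex" where
  "diff_quot_0 h z = (if z = 0 then deriv h 0 else (h z - h 0) / z)"

lemma diff_quot_0_eq: "h z = h 0 + z * diff_quot_0 h z"
  by (simp add: diff_quot_0_def)

lemma continuous_on_diff_quot_0:
  assumes "h holomorphic_on S" "open S"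
  shows "continuous_on S (diff_quot_0 h)"
  using holomorphic_on_imp_continuous_on[OF pole_lemma_open[OF assms, of 0]]
  by (simp add: diff_quot_0_def cong: if_cong)

lemma zero_in_image_if_sphere_homotopic_id:
  fixes \<phi> :: "'a::euclidean_space \<Rightarrow> 'a"
  assumes r: "0 < r" and cont: "continuous_on (cball 0 r) \<phi>"
    and hom: "homotopic_with_canon (\<lambda>_. True) (sphere 0 r) (- {0}) \<phi> id"
  shows "0 \<in> \<phi> ` cball 0 r"
proof (rule ccontr)
  assume "0 \<notin> \<phi> ` cball 0 r"
  then obtain c where "homotopic_with_canon (\<lambda>_. True) (sphere 0 r) (- {0}) \<phi> (\<lambda>_. c)"
    using nullhomotopic_from_sphere_extension[where f = \<phi> and a = 0 and r = r and S = "- {0}"] cont by blast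
  then have "homotopic_with_canon (\<lambda>_. True) (sphere 0 r) (- {0}) id (\<lambda>_. c)"
    using hom homotopic_with_symD homotopic_with_trans by blast
  then have "homotopic_with_canon (\<lambda>_. True) (sphere 0 r) (sphere 0 r)
               ((\<lambda>x. (r / norm x) *\<^sub>R x) \<circ> id) ((\<lambda>x. (r / norm x) *\<^sub>R x) \<circ> (\<lambda>_. c))"
    by (rule homotopic_with_compose_continuous_left)
       (use r in \<open>auto intro!: continuous_intros simp: Pi_iff\<close>)
  then have "homotopic_with_canon (\<lambda>_. True) (sphere 0 r) (sphere 0 r) id (\<lambda>_. (r / norm c) *\<^sub>R c)"
    by (rule homotopic_with_eq) auto
  then have "contractible (sphere (0::'a) r)"
    unfolding contractible_def by blast
  with r show False
    by (simp add: contractible_sphere)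
qed

lemma harmonic_covers_ball_if_sphere_bound:
  assumes h: "h holomorphic_on ball 0 1" and g: "g holomorphic_on ball 0 1"
    and h0: "h 0 = 0" and dh0: "deriv h 0 = 1"
    and dom: "\<And>\<zeta>. \<zeta> \<in> ball 0 1 \<Longrightarrow> \<zeta> \<noteq> 0 \<Longrightarrow> norm (g \<zeta>) < norm (h \<zeta>)"
    and r: "0 < r" "r < 1"
    and w: "\<And>\<zeta>. \<zeta> \<in> sphere 0 r \<Longrightarrow> norm w < norm (h \<zeta> + cnj (g \<zeta>))"
  shows "w \<in> (\<lambda>\<zeta>. h \<zeta> + cnj (g \<zeta>)) ` ball 0 r"
proof -
  define f where "f = (\<lambda>\<zeta>. h \<zeta> + cnj (g \<zeta>))"
  define q where "q = diff_quot_0 h"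
  let ?S = "sphere (0::complex) r" and ?T = "- {0::complex}"
  have sub: "cball 0 r \<subseteq> ball (0::complex) 1" and sub_S: "?S \<subseteq> ball 0 1"
    using r by auto
  have cont_h: "continuous_on (ball 0 1) h" and cont_f: "continuous_on (ball 0 1) f"
    using holomorphic_on_imp_continuous_on[OF h] holomorphic_on_imp_continuous_on[OF g]
    by (auto simp: f_def intro!: continuous_intros)
  have cont_q: "continuous_on (ball 0 1) q"
    unfolding q_def by (rule continuous_on_diff_quot_0[OF h open_ball])
  have q_nz: "q \<zeta> \<noteq> 0" if "\<zeta> \<in> ball 0 1" for \<zeta>
  proof (cases "\<zeta> = 0")
    case False
    then have "h \<zeta> \<noteq> 0"
      using dom[OF that] by fastforce
    with False show ?thesis
      by (simp add: q_def diff_quot_0_def h0)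
  qed (simp add: q_def diff_quot_0_def dh0)
  have "homotopic_with_canon (\<lambda>_. True) ?S ?T (\<lambda>\<zeta>. f \<zeta> - w) f"
  proof (rule homotopic_with_linear)
    have "continuous_on ?S f"
      using continuous_on_subset[OF cont_f sub_S] .
    then show "continuous_on ?S (\<lambda>\<zeta>. f \<zeta> - w)" "continuous_on ?S f"
      by (auto intro: continuous_on_diff continuous_on_const)
    fix \<zeta> assume "\<zeta> \<in> ?S"
    then have "norm w < norm (f \<zeta>)"
      using w by (simp add: f_def)
    then show "closed_segment (f \<zeta> - w) (f \<zeta>) \<subseteq> ?T"
      using segment_bound(2)[of _ "f \<zeta> - w" "f \<zeta>"] by fastforce
  qed
  moreover have "homotopic_with_canon (\<lambda>_. True) ?S ?T f h"
  proof (rule homotopic_with_linear)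
    show "continuous_on ?S f" "continuous_on ?S h"
      using continuous_on_subset[OF cont_f sub_S] continuous_on_subset[OF cont_h sub_S] .
    fix \<zeta> assume "\<zeta> \<in> ?S"
    then have "norm (g \<zeta>) < norm (h \<zeta>)"
      using dom r by auto
    then show "closed_segment (f \<zeta>) (h \<zeta>) \<subseteq> ?T"
      using segment_bound(2)[of _ "f \<zeta>" "h \<zeta>"] by (fastforce simp: f_def)
  qed
  moreover have "homotopic_with_canon (\<lambda>_. True) ?S ?T id h"
  proof -
    \<comment> \<open>\<open>h \<zeta> = \<zeta> q \<zeta>\<close> with \<open>q\<close> zero-free and \<open>q 0 = 1\<close>: shrink the argument of \<open>q\<close> to \<open>0\<close>.\<close>
    define K where "K = (\<lambda>(t::real, \<zeta>). \<zeta> * q (of_real t * \<zeta>))"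
    have in_ball: "of_real t * \<zeta> \<in> ball 0 1" if "t \<in> {0..1}" "\<zeta> \<in> ?S" for t \<zeta>
    proof -
      have "t * r \<le> r"
        using that r by (intro mult_left_le_one_le) auto
      moreover have "norm (of_real t * \<zeta>) = t * r"
        using that by (simp add: norm_mult)
      ultimately show ?thesis
        unfolding mem_ball_0 using r by linarith
    qed
    have "continuous_on ({0..1} \<times> ?S) K"
      unfolding K_def case_prod_beta
      by (intro continuous_intros continuous_on_compose2[OF cont_q]) (auto intro: in_ball)
    moreover have "K ` ({0..1} \<times> ?S) \<subseteq> ?T"
      using q_nz in_ball r by (auto simp: K_def)
    moreover have "K (0, \<zeta>) = id \<zeta>" "K (1, \<zeta>) = h \<zeta>" for \<zeta>
      using diff_quot_0_eq[of h \<zeta>] h0 dh0 by (simp_all add: K_def q_def diff_quot_0_def mult.commute)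
    ultimately show ?thesis
      unfolding homotopic_with_def by (intro exI[of _ K]) (auto simp: image_subset_iff_funcset)
  qed
  ultimately have "homotopic_with_canon (\<lambda>_. True) ?S ?T (\<lambda>\<zeta>. f \<zeta> - w) id"
    by (meson homotopic_with_symD homotopic_with_trans)
  moreover have "continuous_on (cball 0 r) (\<lambda>\<zeta>. f \<zeta> - w)"
    using continuous_on_subset[OF cont_f sub] by (intro continuous_intros)
  ultimately have "0 \<in> (\<lambda>\<zeta>. f \<zeta> - w) ` cball 0 r"
    using zero_in_image_if_sphere_homotopic_id r(1) by blast
  then obtain \<zeta> where "\<zeta> \<in> cball 0 r" "f \<zeta> = w"
    by auto
  moreover have "\<zeta> \<notin> ?S"
    using w \<open>f \<zeta> = w\<close> by (auto simp: f_def)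
  ultimately show ?thesis
    by (auto simp: f_def)
qed

lemma class_S_cong:
  assumes "F \<in> class_S" "\<And>z. z \<in> ball 0 1 \<Longrightarrow> F z = F' z"
  shows "F' \<in> class_S"
proof -
  have "eventually (\<lambda>z. z \<in> ball 0 1) (nhds 0)"
    by (intro eventually_nhds_in_open) auto
  then have "deriv F 0 = deriv F' 0"
    using assms(2) by (intro deriv_cong_ev) (auto elim!: eventually_mono)
  moreover have "F' holomorphic_on ball 0 1" "inj_on F' (ball 0 1)"
    using assms holomorphic_cong[of "ball 0 1" "ball 0 1" F F'] inj_on_cong[of "ball 0 1" F F']
    by (auto simp: class_S_def)
  ultimately show ?thesis
    using assms by (auto simp: class_S_def)
qed

lemma norm_less_if_no_unimodular_zero:
  assumes h: "h holomorphic_on ball 0 1" and g: "g holomorphic_on ball 0 1"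
    and h0: "h 0 = 0" and g0: "g 0 = 0" and d0: "norm (deriv g 0) < norm (deriv h 0)"
    and nz: "\<And>\<zeta> \<epsilon>. \<zeta> \<in> ball 0 1 \<Longrightarrow> \<zeta> \<noteq> 0 \<Longrightarrow> norm \<epsilon> = 1 \<Longrightarrow> h \<zeta> + \<epsilon> * g \<zeta> \<noteq> 0"
    and \<zeta>: "\<zeta> \<in> ball 0 1" "\<zeta> \<noteq> 0"
  shows "norm (g \<zeta>) < norm (h \<zeta>)"
proof -
  define \<phi> where "\<phi> = (\<lambda>z. norm (diff_quot_0 h z) - norm (diff_quot_0 g z))"
  have norm_eq: "norm (k z) = norm z * norm (diff_quot_0 k z)" if "k 0 = 0" for k z
    using diff_quot_0_eq[of k z] that by (simp add: norm_mult)
  have \<phi>_nz: "\<phi> z \<noteq> 0" if z: "z \<in> ball 0 1" for z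
  proof (cases "z = 0")
    case True
    then show ?thesis
      using d0 by (simp add: \<phi>_def diff_quot_0_def)
  next
    case False
    show ?thesis
    proof
      assume "\<phi> z = 0"
      then have eq: "norm (g z) = norm (h z)"
        using norm_eq[of h z] norm_eq[of g z] h0 g0 by (simp add: \<phi>_def)
      define \<epsilon> where "\<epsilon> = (if g z = 0 then 1 else - h z / g z)"
      have "norm \<epsilon> = 1" "h z + \<epsilon> * g z = 0"
        using eq by (auto simp: \<epsilon>_def norm_divide)
      with nz[OF z False] show False
        by blast
    qed
  qed
  have "continuous_on (ball 0 1) \<phi>"
    unfolding \<phi>_def
    using continuous_on_diff_quot_0[OF h open_ball] continuous_on_diff_quot_0[OF g open_ball]
    by (intro continuous_intros)
  then have "connected (\<phi> ` ball 0 1)"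
    by (rule connected_continuous_image) simp
  moreover have "\<phi> 0 > 0"
    using d0 by (simp add: \<phi>_def diff_quot_0_def)
  ultimately have "\<phi> \<zeta> > 0"
    using connected_ivt_component[of "\<phi> ` ball 0 1" "\<phi> \<zeta>" "\<phi> 0" 1 0] \<phi>_nz \<zeta>(1)
    by (force simp: not_less)
  then show ?thesis
    using norm_eq[of h \<zeta>] norm_eq[of g \<zeta>] h0 g0 \<zeta>(2) by (simp add: \<phi>_def)
qed

lemma harmonic_analogue_decomposition:
  assumes f: "f \<in> harmonic_analogue G" and GS: "G \<subseteq> class_S"
  obtains h g where "h holomorphic_on ball 0 1" "g holomorphic_on ball 0 1"
    "\<And>z. z \<in> ball 0 1 \<Longrightarrow> f z = h z + cnj (g z)"
    "h 0 = 0" "deriv h 0 = 1"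
    "\<And>\<zeta>. \<zeta> \<in> ball 0 1 \<Longrightarrow> \<zeta> \<noteq> 0 \<Longrightarrow> norm (g \<zeta>) < norm (h \<zeta>)"
proof -
  obtain h g where h: "h holomorphic_on ball 0 1" and g: "g holomorphic_on ball 0 1"
    and fhg: "\<And>z. z \<in> ball 0 1 \<Longrightarrow> f z = h z + cnj (g z)"
    and ex: "\<And>\<epsilon>. norm \<epsilon> = 1 \<Longrightarrow> \<exists>F\<in>G. \<forall>z\<in>ball 0 1. F z = h z + \<epsilon> * g z"
    using f unfolding harmonic_analogue_def by blast
  have S: "(\<lambda>z. h z + \<epsilon> * g z) \<in> class_S" if \<epsilon>: "norm \<epsilon> = 1" for \<epsilon>
  proof -
    obtain F where F: "F \<in> G" "\<forall>z\<in>ball 0 1. F z = h z + \<epsilon> * g z"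
      using ex[OF \<epsilon>] by blast
    show ?thesis
      by (rule class_S_cong[of F]) (use F GS in auto)
  qed
  have deriv: "deriv (\<lambda>z. h z + \<epsilon> * g z) 0 = deriv h 0 + \<epsilon> * deriv g 0" for \<epsilon>
  proof (rule DERIV_imp_deriv)
    have "(h has_field_derivative deriv h 0) (at 0)" "(g has_field_derivative deriv g 0) (at 0)"
      using holomorphic_derivI[OF h open_ball] holomorphic_derivI[OF g open_ball] by simp_all
    then show "((\<lambda>z. h z + \<epsilon> * g z) has_field_derivative deriv h 0 + \<epsilon> * deriv g 0) (at 0)"
      by (auto intro!: derivative_eq_intros)
  qed
  have sum: "h 0 + g 0 = 0" "deriv h 0 + deriv g 0 = 1"
    and dif: "h 0 - g 0 = 0" "deriv h 0 - deriv g 0 = 1"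
    using S[of 1] S[of "-1"] deriv[of 1] deriv[of "-1"] by (auto simp: class_S_def)
  have "2 * h 0 = (h 0 + g 0) + (h 0 - g 0)" "2 * g 0 = (h 0 + g 0) - (h 0 - g 0)"
    "2 * deriv h 0 = (deriv h 0 + deriv g 0) + (deriv h 0 - deriv g 0)"
    "2 * deriv g 0 = (deriv h 0 + deriv g 0) - (deriv h 0 - deriv g 0)"
    by (simp_all add: algebra_simps)
  then have h0: "h 0 = 0" and g0: "g 0 = 0" and dh0: "deriv h 0 = 1" and dg0: "deriv g 0 = 0"
    unfolding sum dif by simp_all
  have nz: "h \<zeta> + \<epsilon> * g \<zeta> \<noteq> 0" if "\<zeta> \<in> ball 0 1" "\<zeta> \<noteq> 0" "norm \<epsilon> = 1" for \<zeta> \<epsilon>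
    using S[OF that(3)] that(1,2) inj_onD[of "\<lambda>z. h z + \<epsilon> * g z" "ball 0 1" \<zeta> 0]
    by (auto simp: class_S_def)
  show thesis
  proof (rule that[OF h g fhg h0 dh0])
    fix \<zeta> :: complex assume "\<zeta> \<in> ball 0 1" "\<zeta> \<noteq> 0"
    then show "norm (g \<zeta>) < norm (h \<zeta>)"
      by (intro norm_less_if_no_unimodular_zero[OF h g h0 g0 _ nz]) (simp_all add: dh0 dg0)
  qed
qed

lemma harmonic_analogue_pointwise_member:
  assumes "f \<in> harmonic_analogue G" "z \<in> ball 0 1"
  obtains F where "F \<in> G" "f z = F z"
proof -
  obtain h g where fhg: "f z = h z + cnj (g z)"
    and ex: "\<And>\<epsilon>. norm \<epsilon> = 1 \<Longrightarrow> \<exists>F\<in>G. \<forall>z\<in>ball 0 1. F z = h z + \<epsilon> * g z"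
    using assms unfolding harmonic_analogue_def by blast
  define \<epsilon> where "\<epsilon> = (if g z = 0 then 1 else cnj (g z) / g z)"
  have "norm \<epsilon> = 1" "\<epsilon> * g z = cnj (g z)"
    by (simp_all add: \<epsilon>_def norm_divide)
  then obtain F where "F \<in> G" "\<forall>z\<in>ball 0 1. F z = h z + \<epsilon> * g z"
    using ex by blast
  with fhg assms(2) \<open>\<epsilon> * g z = cnj (g z)\<close> show thesis
    using that by simp
qed

lemma norm_le_integral_of_deriv_bound:
  assumes F: "F holomorphic_on ball 0 1" and F0: "F 0 = 0" and z: "z \<in> ball 0 1"
    and Q: "Q integrable_on {0..norm z}"
    and bound: "\<And>\<zeta>. \<zeta> \<in> ball 0 1 \<Longrightarrow> norm (deriv F \<zeta>) \<le> Q (norm \<zeta>)"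
  shows "norm (F z) \<le> integral {0..norm z} Q"
proof (cases "z = 0")
  case True
  then show ?thesis
    using F0 by simp
next
  case False
  define r where "r = norm z"
  define u where "u = z / of_real r"
  have r: "0 < r" "r < 1"
    using False z by (auto simp: r_def)
  have u: "norm u = 1" "of_real r * u = z"
    using False by (simp_all add: u_def r_def norm_divide)
  have in_ball: "of_real \<rho> * u \<in> ball 0 1" if "\<rho> \<in> {0..r}" for \<rho>
    using that r u by (auto simp: norm_mult)
  have der: "((\<lambda>\<rho>. F (of_real \<rho> * u)) has_vector_derivative u * deriv F (of_real \<rho> * u)) (at \<rho> within {0..r})"
    if "\<rho> \<in> {0..r}" for \<rho>
  proof -
    have "((\<lambda>x::real. of_real x * u) has_vector_derivative u) (at \<rho> within {0..r})"
      by (simp add: has_vector_derivative_real_field mult.commute)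
    from field_vector_diff_chain_within[OF this
        has_field_derivative_at_within[OF holomorphic_derivI[OF F open_ball in_ball[OF that]]]]
    show ?thesis
      by (simp add: o_def)
  qed
  have int: "((\<lambda>\<rho>. u * deriv F (of_real \<rho> * u)) has_integral F z) {0..r}"
    using fundamental_theorem_of_calculus[of 0 r, OF _ der] r u F0 by simp
  have "norm (F z) = norm (integral {0..r} (\<lambda>\<rho>. u * deriv F (of_real \<rho> * u)))"
    using integral_unique[OF int] by simp
  also have "\<dots> \<le> integral {0..r} Q"
  proof (rule integral_norm_bound_integral)
    show "(\<lambda>\<rho>. u * deriv F (of_real \<rho> * u)) integrable_on {0..r}"
      using int by blast
    show "Q integrable_on {0..r}"
      using Q by (simp add: r_def)
    fix \<rho> assume "\<rho> \<in> {0..r}"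
    then show "norm (u * deriv F (of_real \<rho> * u)) \<le> Q \<rho>"
      using bound[OF in_ball] u by (simp add: norm_mult)
  qed
  finally show ?thesis
    by (simp add: r_def)
qed

lemma continuous_on_INF_circle:
  fixes k :: "complex \<Rightarrow> real"
  assumes "continuous_on (cball 0 r) k"
  shows "continuous_on {0..r} (\<lambda>\<rho>. INF u\<in>sphere 0 1. k (of_real \<rho> * u))"
proof -
  define m where "m = (\<lambda>\<rho>. INF u\<in>sphere (0::complex) 1. k (of_real \<rho> * u))"
  have in_cball: "of_real \<rho> * u \<in> cball 0 r" if "\<rho> \<in> {0..r}" "u \<in> sphere 0 1" for \<rho> and u :: complex
    using that by (simp add: norm_mult)
  obtain B where B: "\<And>x. x \<in> cball 0 r \<Longrightarrow> norm (k x) \<le> B"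
    using compact_imp_bounded[OF compact_continuous_image[OF assms compact_cball]]
    unfolding bounded_iff by blast
  have bdd: "bdd_below ((\<lambda>u. k (of_real \<rho> * u)) ` sphere 0 1)" if "\<rho> \<in> {0..r}" for \<rho>
  proof (rule bdd_belowI[of _ "-B"])
    fix y assume "y \<in> (\<lambda>u. k (of_real \<rho> * u)) ` sphere 0 1"
    then obtain u where u: "u \<in> sphere 0 1" "y = k (of_real \<rho> * u)"
      by blast
    then show "-B \<le> y"
      using B[OF in_cball[OF that u(1)]] by (simp add: abs_le_iff)
  qed
  have m_le: "m \<rho>1 - e \<le> m \<rho>2"
    if "\<rho>1 \<in> {0..r}" and close: "\<And>u. u \<in> sphere 0 1 \<Longrightarrow> k (of_real \<rho>1 * u) - k (of_real \<rho>2 * u) < e"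
    for \<rho>1 \<rho>2 e
    unfolding m_def
  proof (rule cINF_greatest)
    fix u :: complex assume u: "u \<in> sphere 0 1"
    show "(INF u\<in>sphere 0 1. k (of_real \<rho>1 * u)) - e \<le> k (of_real \<rho>2 * u)"
      using cINF_lower[OF bdd[OF that(1)] u] close[OF u] by linarith
  qed simp
  have "uniformly_continuous_on {0..r} m"
    unfolding uniformly_continuous_on_def
  proof (intro allI impI)
    fix e :: real assume e: "e > 0"
    obtain \<delta> where \<delta>: "\<delta> > 0"
      "\<And>x x'. x \<in> cball 0 r \<Longrightarrow> x' \<in> cball 0 r \<Longrightarrow> dist x' x < \<delta> \<Longrightarrow> dist (k x') (k x) < e / 2"
      using compact_uniformly_continuous[OF assms compact_cball] e
      unfolding uniformly_continuous_on_def by (meson half_gt_zero)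
    show "\<exists>d>0. \<forall>x\<in>{0..r}. \<forall>x'\<in>{0..r}. dist x' x < d \<longrightarrow> dist (m x') (m x) < e"
    proof (intro exI[of _ \<delta>] conjI ballI impI \<delta>(1))
      fix x x' assume x: "x \<in> {0..r}" "x' \<in> {0..r}" and dx: "dist x' x < \<delta>"
      have "dist (of_real x' * u) (of_real x * u) = dist x' x" if "u \<in> sphere 0 1" for u :: complex
      proof -
        have "dist (of_real x' * u) (of_real x * u) = norm (of_real (x' - x) * u)"
          by (simp add: dist_norm algebra_simps)
        also have "\<dots> = dist x' x"
          using that by (simp add: norm_mult dist_real_def del: of_real_diff)
        finally show ?thesis .
      qed
      then have close: "\<bar>k (of_real x' * u) - k (of_real x * u)\<bar> < e / 2" if "u \<in> sphere 0 1" for u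
        using \<delta>(2)[OF in_cball in_cball] x dx that by (simp add: dist_real_def)
      have "k (of_real x' * u) - k (of_real x * u) < e / 2"
        and "k (of_real x * u) - k (of_real x' * u) < e / 2" if "u \<in> sphere 0 1" for u
        using close[OF that] unfolding abs_less_iff by linarith+
      then have "m x' - e / 2 \<le> m x" "m x - e / 2 \<le> m x'"
        using m_le x by blast+
      then show "dist (m x') (m x) < e"
        using e by (simp add: dist_real_def abs_if)
    qed
  qed
  then show ?thesis
    unfolding m_def by (rule uniformly_continuous_imp_continuous)
qed

lemma has_real_derivative_norm_path:
  fixes \<gamma> :: "real \<Rightarrow> 'a::real_inner"
  assumes "(\<gamma> has_vector_derivative v) (at t)" "\<gamma> t \<noteq> 0"
  shows "((\<lambda>t. norm (\<gamma> t)) has_real_derivative inner v (sgn (\<gamma> t))) (at t)"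
proof -
  have "((\<lambda>x. norm x) \<circ> \<gamma> has_derivative (\<lambda>h. inner h (sgn (\<gamma> t))) \<circ> (\<lambda>h. h *\<^sub>R v)) (at t)"
    using diff_chain_at[OF assms(1)[unfolded has_vector_derivative_def] has_derivative_norm[OF assms(2)]] .
  moreover have "(\<lambda>h. inner h (sgn (\<gamma> t))) \<circ> (\<lambda>h. h *\<^sub>R v) = (*) (inner v (sgn (\<gamma> t)))"
    by (auto simp: fun_eq_iff mult.commute)
  ultimately show ?thesis
    unfolding has_field_derivative_def by (simp add: o_def)
qed

lemma integral_le_of_path_bound:
  fixes \<gamma> \<gamma>' :: "real \<Rightarrow> complex" and m :: "real \<Rightarrow> real"
  assumes \<gamma>: "continuous_on {0..1} \<gamma>" "\<gamma> 0 = 0"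
    and \<gamma>_le: "\<And>t. t \<in> {0..1} \<Longrightarrow> norm (\<gamma> t) \<le> r"
    and \<gamma>_inner: "\<And>t. 0 < t \<Longrightarrow> t < 1 \<Longrightarrow> 0 < norm (\<gamma> t) \<and> norm (\<gamma> t) < r"
    and \<gamma>': "\<And>t. 0 < t \<Longrightarrow> t < 1 \<Longrightarrow> (\<gamma> has_vector_derivative \<gamma>' t) (at t)"
    and m: "continuous_on {0..r} m" "\<And>\<rho>. \<rho> \<in> {0..r} \<Longrightarrow> 0 \<le> m \<rho>"
    and bound: "\<And>t. 0 < t \<Longrightarrow> t < 1 \<Longrightarrow> m (norm (\<gamma> t)) * norm (\<gamma>' t) \<le> d"
  shows "integral {0..norm (\<gamma> 1)} m \<le> d"
proof -
  define M where "M = (\<lambda>s. integral {0..s} m)"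
  define \<phi> where "\<phi> = (\<lambda>t. M (norm (\<gamma> t)) - d * t)"
  have M': "(M has_real_derivative m s) (at s within {0..r})" if "s \<in> {0..r}" for s
    unfolding M_def by (rule integral_has_real_derivative[OF m(1) that])
  then have "continuous_on {0..r} M"
    by (meson DERIV_continuous continuous_on_eq_continuous_within)
  then have "continuous_on {0..1} \<phi>"
    unfolding \<phi>_def using \<gamma>_le
    by (intro continuous_intros continuous_on_compose2[of "{0..r}" M _ "\<lambda>t. norm (\<gamma> t)"] \<gamma>(1)) auto
  moreover have "\<exists>y. (\<phi> has_real_derivative y) (at t) \<and> y \<le> 0" if t: "0 < t" "t < 1" for t
  proof -
    have \<gamma>t: "\<gamma> t \<noteq> 0" "norm (\<gamma> t) \<in> {0..r}"
      using \<gamma>_inner[OF t] by auto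
    have "(M has_real_derivative m (norm (\<gamma> t))) (at (norm (\<gamma> t)))"
      using M'[OF \<gamma>t(2)] at_within_Icc_at[of 0 "norm (\<gamma> t)" r] \<gamma>_inner[OF t] by simp
    from DERIV_chain2[OF this has_real_derivative_norm_path[OF \<gamma>'[OF t] \<gamma>t(1)]]
    have "(\<phi> has_real_derivative m (norm (\<gamma> t)) * inner (\<gamma>' t) (sgn (\<gamma> t)) - d) (at t)"
      unfolding \<phi>_def by (auto intro!: derivative_eq_intros)
    moreover have "inner (\<gamma>' t) (sgn (\<gamma> t)) \<le> norm (\<gamma>' t)"
      using norm_cauchy_schwarz[of "\<gamma>' t" "sgn (\<gamma> t)"] \<gamma>t(1) by (simp add: norm_sgn)
    then have "m (norm (\<gamma> t)) * inner (\<gamma>' t) (sgn (\<gamma> t)) \<le> m (norm (\<gamma> t)) * norm (\<gamma>' t)"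
      using m(2)[OF \<gamma>t(2)] by (rule mult_left_mono)
    ultimately show ?thesis
      using bound[OF t] by (intro exI conjI) (assumption, linarith)
  qed
  ultimately have "\<phi> 1 \<le> \<phi> 0"
    by (intro DERIV_nonpos_imp_decreasing_open[of 0 1 \<phi>]) auto
  then show ?thesis
    using \<gamma>(2) by (simp add: \<phi>_def M_def)
qed

lemma integral_le_norm_univalent:
  assumes F: "F holomorphic_on ball 0 1" and inj: "inj_on F (ball 0 1)" and F0: "F 0 = 0"
    and r: "0 < r" "r < 1" and z0: "z0 \<in> sphere 0 r"
    and covers: "ball 0 (norm (F z0)) \<subseteq> F ` ball 0 r"
    and m: "continuous_on {0..r} m" "\<And>\<rho>. \<rho> \<in> {0..r} \<Longrightarrow> 0 \<le> m \<rho>"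
    and m_le: "\<And>\<zeta>. \<zeta> \<in> ball 0 r \<Longrightarrow> m (norm \<zeta>) \<le> norm (deriv F \<zeta>)"
  shows "integral {0..r} m \<le> norm (F z0)"
proof -
  define w0 where "w0 = F z0"
  obtain Fi where Fi: "Fi holomorphic_on F ` ball 0 1"
    "\<And>z. z \<in> ball 0 1 \<Longrightarrow> deriv F z * deriv Fi (F z) = 1"
    "\<And>z. z \<in> ball 0 1 \<Longrightarrow> Fi (F z) = z"
    using holomorphic_has_inverse[OF F open_ball inj] by blast
  have z0_ball: "z0 \<in> ball 0 1"
    using z0 r by auto
  have "w0 \<noteq> 0"
    using inj_onD[OF inj, of z0 0] z0 r z0_ball F0 by (auto simp: w0_def)
  define \<gamma> where "\<gamma> = (\<lambda>t::real. Fi (of_real t * w0))"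
  \<comment> \<open>\<open>\<gamma>\<close> is the preimage of the segment from \<open>0\<close> to \<open>w0\<close>; it stays inside \<open>ball 0 r\<close> until \<open>t = 1\<close>.\<close>
  have preimage: "\<exists>\<zeta>\<in>ball 0 r. F \<zeta> = of_real t * w0" if "t \<in> {0..<1}" for t
  proof -
    have "norm (of_real t * w0) < norm w0"
      using that \<open>w0 \<noteq> 0\<close> by (simp add: norm_mult)
    then show ?thesis
      using covers by (force simp: w0_def)
  qed
  have \<gamma>_mem: "\<gamma> t \<in> ball 0 r \<and> F (\<gamma> t) = of_real t * w0" if t: "t \<in> {0..<1}" for t
  proof -
    obtain \<zeta> where \<zeta>: "\<zeta> \<in> ball 0 r" "F \<zeta> = of_real t * w0"
      using preimage[OF t] by blast
    then have "\<gamma> t = \<zeta>"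
      using Fi(3)[of \<zeta>] r by (auto simp: \<gamma>_def)
    with \<zeta> show ?thesis
      by simp
  qed
  have \<gamma>1: "\<gamma> 1 = z0"
    using Fi(3)[OF z0_ball] by (simp add: \<gamma>_def w0_def)
  have in_image: "of_real t * w0 \<in> F ` ball 0 1" if t: "t \<in> {0..1}" for t
  proof (cases "t = 1")
    case False
    then obtain \<zeta> where "\<zeta> \<in> ball 0 r" "F \<zeta> = of_real t * w0"
      using preimage[of t] t by force
    moreover have "ball 0 r \<subseteq> ball (0::complex) 1"
      using r by auto
    ultimately show ?thesis
      by (metis image_eqI subsetD)
  qed (use z0_ball in \<open>simp add: w0_def\<close>)
  have "integral {0..norm (\<gamma> 1)} m \<le> norm w0"
  proof (rule integral_le_of_path_bound[where \<gamma>' = "\<lambda>t. w0 * deriv Fi (of_real t * w0)"])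
    show "continuous_on {0..1} \<gamma>"
      unfolding \<gamma>_def using in_image
      by (intro continuous_on_compose2[OF holomorphic_on_imp_continuous_on[OF Fi(1)]] continuous_intros) auto
    show "\<gamma> 0 = 0"
      using Fi(3)[of 0] F0 by (simp add: \<gamma>_def)
    show "norm (\<gamma> t) \<le> r" if "t \<in> {0..1}" for t
      using \<gamma>_mem[of t] \<gamma>1 z0 that by (cases "t = 1") auto
    show "0 < norm (\<gamma> t) \<and> norm (\<gamma> t) < r" if "0 < t" "t < 1" for t
      using \<gamma>_mem[of t] that \<open>w0 \<noteq> 0\<close> F0 by (cases "\<gamma> t = 0") auto
    fix t :: real assume t: "0 < t" "t < 1"
    obtain \<zeta> where \<zeta>: "\<zeta> \<in> ball 0 r" "F \<zeta> = of_real t * w0" "\<gamma> t = \<zeta>"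
      using \<gamma>_mem[of t] t by auto
    have "((\<lambda>x. of_real x * w0) has_vector_derivative w0) (at t)"
      by (simp add: has_vector_derivative_real_field mult.commute)
    moreover have "(Fi has_field_derivative deriv Fi (of_real t * w0)) (at (of_real t * w0))"
      using holomorphic_derivI[OF Fi(1) open_mapping_thm3[OF F open_ball inj] in_image] t by simp
    ultimately have "((Fi \<circ> (\<lambda>x. of_real x * w0)) has_vector_derivative w0 * deriv Fi (of_real t * w0)) (at t)"
      by (rule field_vector_diff_chain_at)
    then show "(\<gamma> has_vector_derivative w0 * deriv Fi (of_real t * w0)) (at t)"
      by (simp add: \<gamma>_def o_def)
    have "m (norm \<zeta>) * norm (w0 * deriv Fi (of_real t * w0))
        \<le> norm (deriv F \<zeta>) * norm (w0 * deriv Fi (of_real t * w0))"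
      by (rule mult_right_mono[OF m_le[OF \<zeta>(1)] norm_ge_zero])
    also have "\<dots> = norm w0"
    proof -
      have "norm (deriv F \<zeta>) * norm (deriv Fi (F \<zeta>)) = 1"
        using Fi(2)[of \<zeta>] \<zeta>(1) r by (simp flip: norm_mult)
      then show ?thesis
        by (simp add: norm_mult flip: \<zeta>(2))
    qed
    finally show "m (norm (\<gamma> t)) * norm (w0 * deriv Fi (of_real t * w0)) \<le> norm w0"
      using \<zeta>(3) by simp
  qed (use m in auto)
  then show ?thesis
    using \<gamma>1 z0 by (simp add: w0_def)
qed

lemma integral_le_norm_class_S:
  assumes F: "F \<in> class_S" and z: "z \<in> ball 0 1" and P: "P integrable_on {0..norm z}"
    and bound: "\<And>\<zeta>. \<zeta> \<in> ball 0 1 \<Longrightarrow> P (norm \<zeta>) \<le> norm (deriv F \<zeta>)"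
  shows "integral {0..norm z} P \<le> norm (F z)"
proof (cases "z = 0")
  case True
  then show ?thesis
    by simp
next
  case False
  define r where "r = norm z"
  have r: "0 < r" "r < 1"
    using False z by (auto simp: r_def)
  have hol: "F holomorphic_on ball 0 1" and inj: "inj_on F (ball 0 1)" and F0: "F 0 = 0"
    and dF0: "deriv F 0 = 1"
    using F by (auto simp: class_S_def)
  have sub: "cball 0 r \<subseteq> ball (0::complex) 1" "sphere 0 r \<subseteq> ball (0::complex) 1"
    using r by auto
  have "continuous_on (sphere 0 r) (\<lambda>\<zeta>. norm (F \<zeta>))"
    using holomorphic_on_imp_continuous_on[OF holomorphic_on_subset[OF hol sub(2)]]
    by (intro continuous_intros)
  moreover have "sphere (0::complex) r \<noteq> {}"
    using r by simp
  ultimately obtain z0 where z0: "z0 \<in> sphere 0 r"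
    and z0_min: "\<And>\<zeta>. \<zeta> \<in> sphere 0 r \<Longrightarrow> norm (F z0) \<le> norm (F \<zeta>)"
    using continuous_attains_inf[OF compact_sphere] by metis
  have covers: "ball 0 (norm (F z0)) \<subseteq> F ` ball 0 r"
  proof
    fix w :: complex assume w: "w \<in> ball 0 (norm (F z0))"
    have dom: "norm (0::complex) < norm (F \<zeta>)" if "\<zeta> \<in> ball 0 1" "\<zeta> \<noteq> 0" for \<zeta>
      using inj_onD[OF inj, of \<zeta> 0] that F0 by auto
    have "norm w < norm (F \<zeta> + cnj 0)" if "\<zeta> \<in> sphere 0 r" for \<zeta>
      using w z0_min[OF that] by simp
    from harmonic_covers_ball_if_sphere_bound[OF hol holomorphic_on_const F0 dF0 dom r this]
    show "w \<in> F ` ball 0 r"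
      by simp
  qed
  define m where "m = (\<lambda>\<rho>. INF u\<in>sphere 0 1. norm (deriv F (of_real \<rho> * u)))"
  have m_cont: "continuous_on {0..r} m"
    unfolding m_def using sub(1)
    by (intro continuous_on_INF_circle continuous_on_norm continuous_on_subset[OF
          holomorphic_on_imp_continuous_on[OF holomorphic_deriv[OF hol open_ball]]])
  have m_nonneg: "0 \<le> m \<rho>" for \<rho>
    unfolding m_def by (rule cINF_greatest) auto
  have m_le: "m (norm \<zeta>) \<le> norm (deriv F \<zeta>)" for \<zeta>
  proof -
    define u where "u = (if \<zeta> = 0 then 1 else sgn \<zeta>)"
    have u: "u \<in> sphere 0 1" "of_real (norm \<zeta>) * u = \<zeta>"
      by (simp_all add: u_def norm_sgn) (simp add: complex_sgn_def scaleR_conv_of_real)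
    have "bdd_below ((\<lambda>u. norm (deriv F (of_real (norm \<zeta>) * u))) ` sphere 0 1)"
      by (rule bdd_belowI[of _ 0]) auto
    from cINF_lower[OF this u(1)] show ?thesis
      unfolding m_def u(2) .
  qed
  have P_le: "P \<rho> \<le> m \<rho>" if "\<rho> \<in> {0..r}" for \<rho>
    unfolding m_def
  proof (rule cINF_greatest)
    fix u :: complex assume "u \<in> sphere 0 1"
    then have "of_real \<rho> * u \<in> ball 0 1" "norm (of_real \<rho> * u) = \<rho>"
      using that r by (auto simp: norm_mult)
    then show "P \<rho> \<le> norm (deriv F (of_real \<rho> * u))"
      using bound[of "of_real \<rho> * u"] by simp
  qed simp
  have "integral {0..r} P \<le> integral {0..r} m"
    using P P_le integrable_continuous_real[OF m_cont] by (intro integral_le) (auto simp: r_def)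
  also have "\<dots> \<le> norm (F z0)"
    using m_nonneg m_le by (intro integral_le_norm_univalent[OF hol inj F0 r z0 covers m_cont]) auto
  also have "\<dots> \<le> norm (F z)"
    using z0_min[of z] by (simp add: r_def)
  finally show ?thesis
    by (simp add: r_def)
qed

lemma harmonic_analogue_norm_bounds:
  assumes GS: "G \<subseteq> class_S" and f: "f \<in> harmonic_analogue G" and z: "z \<in> ball 0 1"
    and P: "P integrable_on {0..norm z}" and Q: "Q integrable_on {0..norm z}"
    and deriv_bounds: "\<And>F \<zeta>. F \<in> G \<Longrightarrow> \<zeta> \<in> ball 0 1 \<Longrightarrow>
      P (norm \<zeta>) \<le> norm (deriv F \<zeta>) \<and> norm (deriv F \<zeta>) \<le> Q (norm \<zeta>)"
  shows "integral {0..norm z} P \<le> norm (f z) \<and> norm (f z) \<le> integral {0..norm z} Q"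
proof -
  obtain F where F: "F \<in> G" "f z = F z"
    using harmonic_analogue_pointwise_member[OF f z] .
  then have "F \<in> class_S"
    using GS by blast
  then have "integral {0..norm z} P \<le> norm (F z)" "norm (F z) \<le> integral {0..norm z} Q"
    using deriv_bounds[OF F(1)] integral_le_norm_class_S[OF _ z P] norm_le_integral_of_deriv_bound[OF _ _ z Q]
    by (auto simp: class_S_def)
  with F(2) show ?thesis
    by simp
qed

lemma harmonic_analogue_covers:
  assumes GS: "G \<subseteq> class_S" and f: "f \<in> harmonic_analogue G" and r: "0 < r" "r < 1"
    and w: "\<And>\<zeta>. \<zeta> \<in> sphere 0 r \<Longrightarrow> norm w < norm (f \<zeta>)"
  shows "w \<in> f ` ball 0 1"
proof -
  obtain h g where h: "h holomorphic_on ball 0 1" and g: "g holomorphic_on ball 0 1"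
    and fhg: "\<And>z. z \<in> ball 0 1 \<Longrightarrow> f z = h z + cnj (g z)"
    and h0: "h 0 = 0" "deriv h 0 = 1"
    and dom: "\<And>\<zeta>. \<zeta> \<in> ball 0 1 \<Longrightarrow> \<zeta> \<noteq> 0 \<Longrightarrow> norm (g \<zeta>) < norm (h \<zeta>)"
    using harmonic_analogue_decomposition[OF f GS] by blast
  have sub: "ball 0 r \<subseteq> ball (0::complex) 1" "sphere 0 r \<subseteq> ball (0::complex) 1"
    using r by auto
  have "w \<in> (\<lambda>\<zeta>. h \<zeta> + cnj (g \<zeta>)) ` ball 0 r"
    using w fhg sub(2) by (intro harmonic_covers_ball_if_sphere_bound[OF h g h0 dom r]) auto
  then show ?thesis
    using fhg sub(1) by force
qed

theorem theorem2p6: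
  fixes G :: "(complex \<Rightarrow> complex) set" and P Q :: "real \<Rightarrow> real"
  assumes "G \<subseteq> class_S"
    and "\<And>r. 0 \<le> r \<Longrightarrow> r < 1 \<Longrightarrow> P integrable_on {0..r}"
    and "\<And>r. 0 \<le> r \<Longrightarrow> r < 1 \<Longrightarrow> Q integrable_on {0..r}"
    and "\<And>f z. f \<in> G \<Longrightarrow> z \<in> ball 0 1 \<Longrightarrow>
           P (norm z) \<le> norm (deriv f z) \<and> norm (deriv f z) \<le> Q (norm z)"
  shows "(\<forall>f\<in>harmonic_analogue G. \<forall>z\<in>ball 0 1.
            integral {0..norm z} P \<le> norm (f z) \<and> norm (f z) \<le> integral {0..norm z} Q)
       \<and> (\<forall>L. ((\<lambda>r. integral {0..r} P) \<longlongrightarrow> L) (at_left 1) \<longrightarrow>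
            (\<forall>f\<in>harmonic_analogue G. ball 0 L \<subseteq> f ` ball 0 1))
       \<and> (filterlim (\<lambda>r. integral {0..r} P) at_top (at_left 1) \<longrightarrow>
            (\<forall>f\<in>harmonic_analogue G. f ` ball 0 1 = UNIV))"
proof -
  have bounds: "integral {0..norm z} P \<le> norm (f z) \<and> norm (f z) \<le> integral {0..norm z} Q"
    if "f \<in> harmonic_analogue G" "z \<in> ball 0 1" for f z
    using that assms by (intro harmonic_analogue_norm_bounds) auto
  have covers: "w \<in> f ` ball 0 1"
    if f: "f \<in> harmonic_analogue G" and "eventually (\<lambda>r. norm w < integral {0..r} P) (at_left 1)" for f w
  proof -
    have "eventually (\<lambda>r. r \<in> {0<..<1} \<and> norm w < integral {0..r} P) (at_left 1)"
      using that(2) eventually_at_left_real[OF zero_less_one] by eventually_elim auto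
    then obtain r where r: "0 < r" "r < 1" "norm w < integral {0..r} P"
      using eventually_happens'[OF trivial_limit_at_left_real] by force
    show ?thesis
      using r bounds[OF f] by (intro harmonic_analogue_covers[OF assms(1) f r(1,2)]) force
  qed
  moreover have "ball 0 L \<subseteq> f ` ball 0 1"
    if "((\<lambda>r. integral {0..r} P) \<longlongrightarrow> L) (at_left 1)" "f \<in> harmonic_analogue G" for L f
    using that by (auto intro!: covers order_tendstoD(1))
  moreover have "f ` ball 0 1 = UNIV"
    if "filterlim (\<lambda>r. integral {0..r} P) at_top (at_left 1)" "f \<in> harmonic_analogue G" for f
    using that by (auto intro!: covers simp: filterlim_at_top_dense)
  ultimately show ?thesis
    using bounds by blast
qed

end
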